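(* For any $A>1$, $\lambda\in[0,1]$, $n_0\in\mathbb{N}$ and any sequence $(\alpha_n)_{n\in\mathbb{N}}$ of positive numbers converging to $0$, there exist $n\ge n_0$ and $f=f_n\in C[-1,1]$ such that $f\ge0$ on $[-1,1]$, $f\equiv0$ on $[-1,-1/2]$, and every algebraic polynomial $P_n$ of degree $\le n$ which is nonnegative in some nonempty neighborhood of $\lambda$ and satisfies $P_n(\lambda)=f(\lambda)$ obeys $$\sup_{x\in[-1,1]}\frac{|f(x)-P_n(x)|}{\omega_3(f,\rho_n(x))}>A\,\alpha_n\sqrt n.$$
   Context: $\rho_n(x):=n^{-1}\sqrt{1-x^2}+n^{-2}$; $\omega_3(f,t)$ is the third modulus of smoothness of $f$ on $[-1,1]$. *)

theory Defs
  imports "HOL-Analysis.Analysis" "HOL-Computational_Algebra.Polynomial"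
begin

definition rho :: "nat \<Rightarrow> real \<Rightarrow> real" where
  "rho n x = sqrt (1 - x\<^sup>2) / real n + 1 / (real n)\<^sup>2"

definition diff3 :: "(real \<Rightarrow> real) \<Rightarrow> real \<Rightarrow> real \<Rightarrow> real" where
  "diff3 f h x = f (x + 3*h) - 3 * f (x + 2*h) + 3 * f (x + h) - f x"

definition omega3 :: "(real \<Rightarrow> real) \<Rightarrow> real \<Rightarrow> real" where
  "omega3 f t = Sup {\<bar>diff3 f h x\<bar> | h x. 0 < h \<and> h \<le> t \<and> -1 \<le> x \<and> x + 3*h \<le> 1}"

end

theory Submission
  imports Defs "HOL-Complex_Analysis.Complex_Analysis"
begin

text \<open>
  Take \<open>f = max 0 g\<close> with \<open>g x = (max 0 (x + 1/2))^3 * (x - lam) * (x - lam + \<epsilon>)\<close>. It vanishes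
  on \<open>[-1, -1/2]\<close>, satisfies \<open>omega3 f t \<le> 4 \<epsilon>^2 + 1300 t^3\<close>, and on \<open>[-1/2, 1]\<close> it differs
  by at most \<open>\<epsilon>^2\<close> from the quintic \<open>p = (x + 1/2)^3 (x - lam) (x - lam + \<epsilon>)\<close>. If \<open>P\<close>
  approximated \<open>f\<close> with constant \<open>K = A \<alpha>\<^sub>n sqrt n\<close>, then \<open>P - p\<close>, rescaled from \<open>[-1/2, 1]\<close>
  to \<open>[-1, 1]\<close>, would be uniformly of order \<open>K \<epsilon>^2 + K / n^3\<close>. But \<open>P lam = 0\<close> and \<open>P \<ge> 0\<close>
  near \<open>lam\<close> force \<open>P' lam = 0\<close> (\<open>P' 1 \<le> 0\<close> if \<open>lam = 1\<close>), whereas \<open>p' lam = (lam + 1/2)^3 \<epsilon>\<close>,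
  so \<open>(P - p)'\<close> has size \<open>\<epsilon>\<close> at \<open>lam\<close>. For \<open>lam < 1\<close> this contradicts Bernstein's inequality
  once \<open>\<epsilon>\<close> is of order \<open>1 / (K n)\<close>. At \<open>lam = 1\<close>, where \<open>rho n\<close> is only of order \<open>n^-2\<close>,
  one first multiplies by \<open>S\<^sub>n^2\<close> with \<open>S\<^sub>n = (1 - T\<^sub>n) / (1 - x)\<close>, which equals \<open>n^2\<close> at 1 and
  compensates the weight \<open>rho^3\<close> elsewhere, and then applies Markov's inequality with
  \<open>\<epsilon>\<close> of order \<open>1 / (K n^2)\<close>. The constants fit because \<open>\<alpha>\<^sub>n \<longlonglongrightarrow> 0\<close> gives \<open>K^2 = o(n)\<close>.
  Both polynomial inequalities come from the Bernstein-Walsh bound on the ellipses with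
  foci \<open>\<plusminus>1\<close> combined with Cauchy's estimate for the derivative.
\<close>

section \<open>Bernstein and Markov inequalities\<close>

lemma poly_map_poly_of_real:
  "poly (map_poly of_real p) (of_real x :: 'a :: real_field) = of_real (poly p x)"
  by (induct p) (simp_all add: map_poly_pCons)

lemma pderiv_map_poly_of_real:
  "pderiv (map_poly (of_real :: real \<Rightarrow> 'a :: real_field) p)
     = map_poly of_real (pderiv p)"
  by (rule poly_eqI) (simp add: coeff_pderiv coeff_map_poly)

lemma poly_eq_sum_upto:
  fixes p :: "'a :: {comm_semiring_0, semiring_1} poly"
  assumes "degree p \<le> N"
  shows "poly p x = (\<Sum>k\<le>N. coeff p k * x ^ k)"
proof -
  have "poly p x = (\<Sum>k\<le>degree p. coeff p k * x ^ k)" by (rule poly_altdef)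
  also have "\<dots> = (\<Sum>k\<le>N. coeff p k * x ^ k)"
    by (rule sum.mono_neutral_left) (use assms in \<open>auto intro: le_degree\<close>)
  finally show ?thesis .
qed

lemma joukowski_preimage_in_disc:
  fixes w :: complex
  obtains z where "z \<noteq> 0" "norm z \<le> 1" "z + 1/z = 2*w"
proof -
  define s where "s = csqrt (w^2 - 1)"
  have s2: "s^2 = w^2 - 1" unfolding s_def by simp
  define z1 where "z1 = w + s"
  define z2 where "z2 = w - s"
  have prod: "z1 * z2 = 1"
    unfolding z1_def z2_def using s2 by (simp add: algebra_simps power2_eq_square)
  have nz: "z1 \<noteq> 0" "z2 \<noteq> 0" using prod by auto
  have "norm z1 * norm z2 = 1" using prod by (metis norm_mult norm_one)
  then have "norm z1 \<le> 1 \<or> norm z2 \<le> 1" by (metis less_1_mult not_le order.refl)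
  moreover have "1/z1 = z2" "1/z2 = z1" using prod nz by (auto simp: field_simps)
  moreover have "z1 + z2 = 2*w" unfolding z1_def z2_def by simp
  ultimately show ?thesis using that nz by (metis add.commute)
qed

lemma joukowski_focal_distance_sum:
  fixes z :: complex
  assumes "z \<noteq> 0"
  shows "norm ((z + 1/z)/2 - 1) + norm ((z + 1/z)/2 + 1) = norm z + 1 / norm z"
proof -
  have e1: "(z + 1/z)/2 - 1 = (z - 1)^2 / (2*z)"
    using assms by (simp add: field_simps power2_eq_square)
  have e2: "(z + 1/z)/2 + 1 = (z + 1)^2 / (2*z)"
    using assms by (simp add: field_simps power2_eq_square)
  have parallelogram: "norm (z - 1)^2 + norm (z + 1)^2 = 2 * norm z ^2 + 2"
    unfolding cmod_power2 by (simp add: power2_eq_square algebra_simps)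
  have "norm ((z + 1/z)/2 - 1) + norm ((z + 1/z)/2 + 1)
      = (norm (z - 1)^2 + norm (z + 1)^2) / (2 * norm z)"
    unfolding e1 e2 by (simp add: norm_divide norm_mult norm_power add_divide_distrib)
  also have "\<dots> = norm z + 1 / norm z"
    unfolding parallelogram using assms by (simp add: field_simps power2_eq_square)
  finally show ?thesis .
qed

lemma add_inverse_le_imp_le:
  fixes t R :: real
  assumes "t \<ge> 1" "R \<ge> 1" "t + 1/t \<le> R + 1/R"
  shows "t \<le> R"
proof (rule ccontr)
  assume "\<not> t \<le> R"
  then have "R < t" by simp
  moreover have "1 < t * R" using mult_left_mono[of 1 R t] assms \<open>R < t\<close> by linarith
  ultimately have "0 < (t - R) * (1 - 1/(t*R))" by simp
  also have "(t - R) * (1 - 1/(t*R)) = (t + 1/t) - (R + 1/R)"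
    using assms by (simp add: field_simps)
  finally show False using assms by simp
qed

lemma joukowski_pullback_le:
  fixes C :: "complex poly"
  assumes deg: "degree C \<le> N" and bnd: "\<forall>s\<in>{-1..1}. norm (poly C (of_real s)) \<le> B"
    and z: "z \<noteq> 0" "norm z \<le> 1"
  shows "norm (z^N * poly C ((z + 1/z)/2)) \<le> B"
proof -
  define F where "F z = (\<Sum>k\<le>N. coeff C k * z^(N-k) * ((z^2+1)/2)^k)" for z :: complex
  have F_eq: "F z = z^N * poly C ((z + 1/z)/2)" if "z \<noteq> 0" for z
  proof -
    have "z^N * ((z + 1/z)/2)^k = z^(N-k) * ((z^2+1)/2)^k" if "k \<le> N" for k
    proof -
      have "z^N = z^(N-k) * z^k" using \<open>k \<le> N\<close> by (simp flip: power_add)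
      moreover have "z * ((z + 1/z)/2) = (z^2+1)/2"
        using \<open>z \<noteq> 0\<close> by (simp add: field_simps power2_eq_square)
      ultimately show ?thesis by (metis mult.assoc power_mult_distrib)
    qed
    then show ?thesis
      unfolding F_def poly_eq_sum_upto[OF deg] sum_distrib_left
      by (intro sum.cong) (auto simp: mult_ac)
  qed
  have hol: "F holomorphic_on A" for A unfolding F_def by (intro holomorphic_intros) auto
  have circle: "norm (F z) \<le> B" if "norm z = 1" for z
  proof -
    have "z \<noteq> 0" using that by auto
    have "z * cnj z = 1" using that complex_norm_square[of z] by simp
    then have "1/z = cnj z" using \<open>z \<noteq> 0\<close> by (simp add: divide_eq_eq mult.commute)
    then have "(z + 1/z)/2 = of_real (Re z)" by (simp add: complex_add_cnj)
    moreover have "Re z \<in> {-1..1}" using abs_Re_le_cmod[of z] that by auto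
    ultimately show ?thesis using F_eq[OF \<open>z \<noteq> 0\<close>] bnd that by (simp add: norm_mult norm_power)
  qed
  have "norm (F z) \<le> B"
  proof (rule maximum_modulus_frontier[of F "cball 0 1"])
    show "F holomorphic_on interior (cball 0 1)" by (rule hol)
    show "continuous_on (closure (cball 0 1)) F" by (rule holomorphic_on_imp_continuous_on[OF hol])
  qed (use circle z in auto)
  then show ?thesis using F_eq[OF z(1)] by simp
qed

lemma bernstein_walsh_ellipse:
  fixes C :: "complex poly"
  assumes deg: "degree C \<le> N" and bnd: "\<forall>s\<in>{-1..1}. norm (poly C (of_real s)) \<le> B"
    and R: "R \<ge> 1" and w: "norm (w - 1) + norm (w + 1) \<le> R + 1/R"
  shows "norm (poly C w) \<le> R^N * B"
proof -
  have B0: "B \<ge> 0" using bnd[rule_format, of 0] by (auto intro: order_trans[OF norm_ge_zero])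
  obtain z where z: "z \<noteq> 0" "norm z \<le> 1" "z + 1/z = 2*w"
    by (rule joukowski_preimage_in_disc)
  have w_eq: "w = (z + 1/z)/2" using z by simp
  have "norm z + 1/norm z \<le> R + 1/R" using joukowski_focal_distance_sum[OF z(1)] w w_eq by simp
  then have inv_z: "1/norm z \<le> R"
    using add_inverse_le_imp_le[of "1/norm z" R] z R by (simp add: add.commute)
  have "norm (poly C w) = norm (z^N * poly C w) * (1/norm z)^N"
    using z by (simp add: norm_mult norm_power power_one_over)
  also have "\<dots> \<le> B * R^N"
    using joukowski_pullback_le[OF deg bnd z(1,2)] B0 inv_z unfolding w_eq
    by (intro mult_mono power_mono) auto
  finally show ?thesis by (simp add: mult.commute)
qed

lemma pderiv_bound_by_ellipse:
  fixes Q :: "real poly"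
  assumes deg: "degree Q \<le> N" and bnd: "\<forall>s\<in>{-1..1}. \<bar>poly Q s\<bar> \<le> B"
    and R: "R \<ge> 1" and r: "r > 0"
    and circle: "\<And>w::complex. norm (w - of_real x0) = r \<Longrightarrow> norm (w-1) + norm (w+1) \<le> R + 1/R"
  shows "\<bar>poly (pderiv Q) x0\<bar> \<le> R^N * B / r"
proof -
  define C where "C = map_poly (of_real :: real \<Rightarrow> complex) Q"
  have degC: "degree C \<le> N" unfolding C_def using deg by (simp add: degree_map_poly)
  have bndC: "\<forall>s\<in>{-1..1}. norm (poly C (of_real s)) \<le> B"
    using bnd unfolding C_def by (simp add: poly_map_poly_of_real)
  have hol: "poly C holomorphic_on A" for A by (intro holomorphic_intros)
  have "norm ((deriv ^^ 1) (poly C) (of_real x0)) \<le> fact 1 * (R^N * B) / r^1"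
  proof (rule Cauchy_inequality[OF hol holomorphic_on_imp_continuous_on[OF hol] r])
    fix w :: complex assume "norm (of_real x0 - w) = r"
    then have "norm (w - of_real x0) = r" by (simp add: norm_minus_commute)
    then show "norm (poly C w) \<le> R^N * B"
      using bernstein_walsh_ellipse[OF degC bndC R] circle by blast
  qed
  moreover have "deriv (poly C) (of_real x0) = of_real (poly (pderiv Q) x0)"
    unfolding DERIV_imp_deriv[OF poly_DERIV] C_def pderiv_map_poly_of_real
    by (rule poly_map_poly_of_real)
  ultimately show ?thesis by simp
qed

lemma sqrt_shifted_circle_le:
  fixes a v y r :: real
  assumes a: "a > 0" and v: "\<bar>v\<bar> \<le> r" and ra: "r \<le> a/2" and y: "v^2 + y^2 = r^2"
  shows "sqrt ((a - v)^2 + y^2) \<le> a - v + r^2/a"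
proof -
  have av: "a - v \<ge> a/2" using v ra by linarith
  have "r^2 \<le> 2 * (a - v) * (r^2/a)"
  proof -
    have "r^2 * 1 \<le> r^2 * (2 * (a - v) / a)" using av a by (intro mult_left_mono) (auto simp: field_simps)
    then show ?thesis by (simp add: field_simps)
  qed
  moreover have "y^2 \<le> r^2" using y by (metis le_add_same_cancel2 zero_le_power2)
  moreover have "(a - v + r^2/a)^2 = (a - v)^2 + 2 * (a - v) * (r^2/a) + (r^2/a)^2"
    by (simp add: power2_eq_square algebra_simps)
  ultimately have "(a - v)^2 + y^2 \<le> (a - v + r^2/a)^2"
    using zero_le_power2[of "r^2/a"] by linarith
  then have "sqrt ((a - v)^2 + y^2) \<le> sqrt ((a - v + r^2/a)^2)" by (rule real_sqrt_le_mono)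
  also have "\<dots> = a - v + r^2/a" using av a by simp
  finally show ?thesis .
qed

lemma small_circle_focal_distance_sum_le:
  fixes w :: complex
  assumes d: "0 < d" "d \<le> 1 - x0" "d \<le> 1 + x0" and r: "0 < r" "r \<le> d/2"
    and w: "norm (w - of_real x0) = r"
  shows "norm (w - 1) + norm (w + 1) \<le> 2 + 2 * r^2 / d"
proof -
  define a c where "a = 1 - x0" and "c = 1 + x0"
  have a0: "a > 0" and c0: "c > 0" using d unfolding a_def c_def by auto
  define v y where "v = Re w - x0" and "y = Im w"
  have vy: "v^2 + y^2 = r^2" using w unfolding v_def y_def
    by (metis Re_complex_of_real cmod_power2 Im_complex_of_real diff_zero minus_complex.simps)
  then have vr: "\<bar>v\<bar> \<le> r" using r by (metis abs_le_square_iff abs_of_pos le_add_same_cancel1 zero_le_power2)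
  have "norm (w - 1) = sqrt ((a - v)^2 + y^2)"
    unfolding norm_complex_def a_def v_def y_def by (simp add: power2_commute)
  also have "\<dots> \<le> a - v + r^2/a" by (rule sqrt_shifted_circle_le[OF a0 vr]) (use r d vy in \<open>auto simp: a_def\<close>)
  also have "\<dots> \<le> a - v + r^2/d" using d by (intro add_left_mono divide_left_mono) (auto simp: a_def)
  finally have "norm (w - 1) \<le> a - v + r^2/d" .
  moreover have "norm (w + 1) = sqrt ((c - (-v))^2 + y^2)"
    unfolding norm_complex_def c_def v_def y_def by (simp add: algebra_simps)
  moreover have "\<dots> \<le> c + v + r^2/c" using sqrt_shifted_circle_le[OF c0, of "-v" r y] vr r d vy by (auto simp: c_def)
  moreover have "\<dots> \<le> c + v + r^2/d" using d by (intro add_left_mono divide_left_mono) (auto simp: c_def)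
  ultimately show ?thesis unfolding a_def c_def by simp
qed

lemma bernstein_inequality:
  fixes Q :: "real poly"
  assumes deg: "degree Q \<le> N" and N: "N \<ge> 1" and bnd: "\<forall>s\<in>{-1..1}. \<bar>poly Q s\<bar> \<le> B"
    and x0: "-1 < x0" "x0 < 1"
  shows "\<bar>poly (pderiv Q) x0\<bar> \<le> 6 * real N * B / min (1 - x0) (1 + x0)"
proof -
  define d where "d = min (1 - x0) (1 + x0)"
  have d: "0 < d" "d \<le> 1" "d \<le> 1 - x0" "d \<le> 1 + x0" using x0 unfolding d_def by auto
  have Npos: "real N \<ge> 1" using N by simp
  define r R where "r = d / (2 * N)" and "R = 1 + 1 / real N"
  have r: "0 < r" "r \<le> d/2" unfolding r_def using d Npos by (auto simp: field_simps)
  have B0: "B \<ge> 0" using bnd[rule_format, of 0] by auto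
  have "2 * r^2 / d = d / (2 * N^2)" unfolding r_def using d by (simp add: field_simps power2_eq_square)
  also have "\<dots> \<le> 1 / (2 * N^2)" using d Npos by (simp add: divide_right_mono)
  also have "\<dots> \<le> 1 / (real N * (N + 1))"
    using Npos by (intro divide_left_mono) (auto simp: power2_eq_square)
  finally have "2 + 2 * r^2 / d \<le> 2 + 1 / (real N * (N + 1))" by simp
  also have "\<dots> = R + 1/R"
  proof -
    have "real N + real N * real N > 0" using Npos by (simp add: add_pos_nonneg)
    then show ?thesis unfolding R_def using Npos by (simp add: field_simps)
  qed
  finally have ellipse: "2 + 2 * r^2 / d \<le> R + 1/R" .
  have "\<bar>poly (pderiv Q) x0\<bar> \<le> R^N * B / r"
  proof (rule pderiv_bound_by_ellipse[OF deg bnd _ r(1)])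
    show "1 \<le> R" unfolding R_def by simp
    fix w :: complex assume "norm (w - of_real x0) = r"
    from small_circle_focal_distance_sum_le[OF d(1,3,4) r this]
    show "norm (w - 1) + norm (w + 1) \<le> R + 1/R" using ellipse by linarith
  qed
  also have "R^N \<le> 3"
    using exp_ge_one_plus_x_over_n_power_n[of N 1] N exp_le unfolding R_def by simp
  then have "R^N * B / r \<le> 3 * B / r" using B0 r by (intro divide_right_mono mult_right_mono) auto
  also have "3 * B / r = 6 * real N * B / d" unfolding r_def using d Npos by (simp add: field_simps)
  finally show ?thesis unfolding d_def .
qed

lemma markov_inequality_at_one:
  fixes Q :: "real poly"
  assumes deg: "degree Q \<le> N" and N: "N \<ge> 2" and bnd: "\<forall>s\<in>{-1..1}. \<bar>poly Q s\<bar> \<le> B"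
  shows "\<bar>poly (pderiv Q) 1\<bar> \<le> 9 * (real N)^2 * B"
proof -
  have Npos: "real N \<ge> 2" using N by simp
  define r R where "r = 1 / (real N)^2" and "R = 1 + 2 / real N"
  have r0: "r > 0" unfolding r_def using Npos by simp
  have R: "1 \<le> R" "R \<le> 2" unfolding R_def using Npos by (auto simp: field_simps)
  have B0: "B \<ge> 0" using bnd[rule_format, of 0] by auto
  have circle: "norm (w-1) + norm (w+1) \<le> R + 1/R" if w: "norm (w - of_real 1) = r" for w :: complex
  proof -
    have "norm (w + 1) \<le> norm (w - 1) + 2"
      using norm_triangle_ineq[of "w - 1" 2] by (simp add: add.commute)
    then have "norm (w-1) + norm (w+1) \<le> 2 + 2 * r" using w by simp
    also have "2 * r = (R - 1)^2 / 2" unfolding R_def r_def by (simp add: field_simps power2_eq_square)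
    also have "\<dots> \<le> (R - 1)^2 / R" using R by (intro divide_left_mono) auto
    also have "2 + (R - 1)^2 / R = R + 1/R" using R by (simp add: field_simps power2_eq_square)
    finally show ?thesis by simp
  qed
  have "\<bar>poly (pderiv Q) 1\<bar> \<le> R^N * B / r"
    using pderiv_bound_by_ellipse[OF deg bnd R(1) r0, of 1] circle by simp
  also have "R^N \<le> 9"
  proof -
    have "R^N \<le> exp 2" using exp_ge_one_plus_x_over_n_power_n[of N 2] N unfolding R_def by simp
    also have "exp (2::real) = exp 1 * exp 1" by (simp flip: exp_add)
    also have "\<dots> \<le> 3 * 3" by (rule mult_mono) (auto simp: exp_le)
    finally show ?thesis by simp
  qed
  then have "R^N * B / r \<le> 9 * B / r" using B0 r0 by (intro divide_right_mono mult_right_mono) auto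
  also have "9 * B / r = 9 * (real N)^2 * B" unfolding r_def using Npos by (simp add: field_simps)
  finally show ?thesis .
qed

section \<open>Chebyshev polynomials and the kernel \<open>chebS\<close>\<close>

fun chebT :: "nat \<Rightarrow> real poly" where
  "chebT 0 = 1"
| "chebT (Suc 0) = [:0,1:]"
| "chebT (Suc (Suc k)) = [:0,2:] * chebT (Suc k) - chebT k"

text \<open>\<open>chebS k = (1 - chebT k) / (1 - x)\<close>; the recurrence is inherited from that of \<open>chebT\<close>.\<close>

fun chebS :: "nat \<Rightarrow> real poly" where
  "chebS 0 = 0"
| "chebS (Suc 0) = 1"
| "chebS (Suc (Suc k)) = [:0,2:] * chebS (Suc k) - chebS k + [:2:]"

lemma chebT_cos: "poly (chebT k) (cos t) = cos (real k * t)"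
proof (induct k rule: chebT.induct)
  case (3 k)
  have "cos (real (Suc (Suc k)) * t) + cos (real k * t) = 2 * cos t * cos (real (Suc k) * t)"
  proof -
    have a: "real (Suc (Suc k)) * t = real (Suc k) * t + t" by (simp add: algebra_simps)
    have b: "real k * t = real (Suc k) * t - t" by (simp add: algebra_simps)
    show ?thesis unfolding a b cos_add cos_diff by simp
  qed
  then show ?case using 3 by (simp add: algebra_simps)
qed simp_all

lemma chebS_mult_one_minus: "poly (chebS k) x * (1 - x) = 1 - poly (chebT k) x"
proof (induct k rule: chebS.induct)
  case (3 k)
  have "x * (poly (chebS (Suc k)) x * (1 - x)) = x * (1 - poly (chebT (Suc k)) x)" using 3(1) by simp
  then show ?case using 3(2) by (simp add: algebra_simps)
qed simp_all

lemma chebS_one: "poly (chebS k) 1 = (real k)^2"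
  by (induct k rule: chebS.induct) (simp_all add: algebra_simps power2_eq_square)

lemma degree_chebS: "degree (chebS k) \<le> k"
proof (induct k rule: chebS.induct)
  case (3 k)
  have "degree ([:0,2:] * chebS (Suc k)) \<le> Suc (Suc k)"
    using degree_mult_le[of "[:0,2:]" "chebS (Suc k)"] 3(1) by simp
  moreover have "degree (chebS k) \<le> Suc (Suc k)" using 3(2) by simp
  ultimately show ?case
    by (simp only: chebS.simps) (intro degree_add_le degree_diff_le, auto)
qed auto

lemma abs_sin_mult_le: "\<bar>sin (real k * t)\<bar> \<le> real k * \<bar>sin t\<bar>"
proof (induct k)
  case (Suc k)
  have "real (Suc k) * t = real k * t + t" by (simp add: algebra_simps)
  then have "sin (real (Suc k) * t) = sin (real k * t) * cos t + cos (real k * t) * sin t"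
    by (simp only: sin_add)
  then have "\<bar>sin (real (Suc k) * t)\<bar> \<le> \<bar>sin (real k * t)\<bar> * \<bar>cos t\<bar> + \<bar>cos (real k * t)\<bar> * \<bar>sin t\<bar>"
    by (metis abs_mult abs_triangle_ineq)
  also have "\<dots> \<le> \<bar>sin (real k * t)\<bar> * 1 + 1 * \<bar>sin t\<bar>"
    by (intro add_mono mult_mono) auto
  finally show ?case using Suc by (simp add: algebra_simps)
qed simp

lemma one_minus_cos_mult_le: "1 - cos (real k * t) \<le> (real k)^2 * (1 - cos t)"
proof -
  have "(sin (real k * (t/2)))^2 \<le> (real k * \<bar>sin (t/2)\<bar>)^2"
    using abs_sin_mult_le[of k "t/2"] by (metis abs_ge_zero power2_abs power_mono)
  then show ?thesis
    using cos_double_sin[of "real k * (t/2)"] cos_double_sin[of "t/2"] by (simp add: power_mult_distrib)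
qed

lemma chebS_bounds:
  assumes "x \<in> {-1..1}"
  shows "0 \<le> poly (chebS k) x" "poly (chebS k) x \<le> (real k)^2" "(1 - x) * poly (chebS k) x \<le> 2"
proof -
  have "0 \<le> poly (chebS k) x \<and> poly (chebS k) x \<le> (real k)^2 \<and> (1 - x) * poly (chebS k) x \<le> 2"
  proof (cases "x = 1")
    case True
    then show ?thesis by (simp add: chebS_one)
  next
    case False
    then have x1: "x < 1" using assms by auto
    define t where "t = arccos x"
    have "cos t = x" unfolding t_def using assms by (simp add: cos_arccos)
    then have eq: "(1 - x) * poly (chebS k) x = 1 - cos (real k * t)"
      using chebS_mult_one_minus[of k x] chebT_cos[of k t] by (simp add: mult.commute)
    have "(1 - x) * poly (chebS k) x \<le> (1 - x) * (real k)^2"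
      using eq one_minus_cos_mult_le[of k t] \<open>cos t = x\<close> by (simp add: mult.commute)
    then have "poly (chebS k) x \<le> (real k)^2" using x1 by simp
    moreover have "0 \<le> (1 - x) * poly (chebS k) x" "(1 - x) * poly (chebS k) x \<le> 2"
      unfolding eq using cos_le_one[of "real k * t"] cos_ge_minus_one[of "real k * t"] by auto
    moreover have "0 \<le> poly (chebS k) x"
      using \<open>0 \<le> (1 - x) * poly (chebS k) x\<close> x1 by (simp add: zero_le_mult_iff)
    ultimately show ?thesis by blast
  qed
  then show "0 \<le> poly (chebS k) x" "poly (chebS k) x \<le> (real k)^2" "(1 - x) * poly (chebS k) x \<le> 2"
    by blast+
qed

section \<open>The test function\<close>

definition test_core :: "real \<Rightarrow> real \<Rightarrow> real \<Rightarrow> real" where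
  "test_core lam \<epsilon> x = (max 0 (x + 1/2))^3 * ((x - lam) * (x - lam + \<epsilon>))"

definition test_fun :: "real \<Rightarrow> real \<Rightarrow> real \<Rightarrow> real" where
  "test_fun lam \<epsilon> x = max 0 (test_core lam \<epsilon> x)"

definition test_poly :: "real \<Rightarrow> real \<Rightarrow> real poly" where
  "test_poly lam \<epsilon> = [:1/2,1:]^3 * [:-lam,1:] * [:\<epsilon> - lam,1:]"

lemma continuous_on_test_fun: "continuous_on S (test_fun lam \<epsilon>)"
  unfolding test_fun_def test_core_def by (intro continuous_intros)

lemma test_fun_nonneg: "0 \<le> test_fun lam \<epsilon> x"
  by (simp add: test_fun_def)

lemma test_fun_eq_0_left: "x \<le> -1/2 \<Longrightarrow> test_fun lam \<epsilon> x = 0"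
  by (simp add: test_fun_def test_core_def)

lemma test_fun_at_lam: "test_fun lam \<epsilon> lam = 0"
  by (simp add: test_fun_def test_core_def)

lemma poly_test_poly: "poly (test_poly lam \<epsilon>) x = (x + 1/2)^3 * ((x - lam) * (x - lam + \<epsilon>))"
  by (simp add: test_poly_def algebra_simps)

lemma test_core_eq_poly: "-1/2 \<le> x \<Longrightarrow> test_core lam \<epsilon> x = poly (test_poly lam \<epsilon>) x"
  by (simp add: test_core_def poly_test_poly)

lemma degree_test_poly: "degree (test_poly lam \<epsilon>) \<le> 5"
proof -
  have "degree (test_poly lam \<epsilon>) \<le> degree ([:1/2,1:]^3 :: real poly) + 1 + 1"
    unfolding test_poly_def
    by (rule order_trans[OF degree_mult_le] add_mono order_trans[OF degree_mult_le] order_refl | simp)+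
  also have "degree ([:1/2,1:]^3 :: real poly) \<le> 3"
    using degree_power_le[of "[:1/2,1:] :: real poly" 3] by simp
  finally show ?thesis by simp
qed

lemma pderiv_test_poly_at_lam: "poly (pderiv (test_poly lam \<epsilon>)) lam = (lam + 1/2)^3 * \<epsilon>"
proof -
  have eq: "poly (test_poly lam \<epsilon>) = (\<lambda>x. (x + 1/2)^3 * ((x - lam) * (x - lam + \<epsilon>)))"
    by (rule ext) (rule poly_test_poly)
  have "DERIV (\<lambda>x. (x + 1/2)^3 * ((x - lam) * (x - lam + \<epsilon>))) lam :> (lam + 1/2)^3 * \<epsilon>"
    by (rule derivative_eq_intros refl | simp)+
  then show ?thesis by (rule DERIV_unique[OF poly_DERIV[of "test_poly lam \<epsilon>" lam, unfolded eq]])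
qed

lemma test_core_ge:
  assumes "x \<le> 1"
  shows "- (\<epsilon>^2) \<le> test_core lam \<epsilon> x"
proof (cases "0 \<le> (x - lam) * (x - lam + \<epsilon>)")
  case False
  define m where "m = max 0 (x + 1/2)"
  have "m^3 \<le> (3/2)^3" unfolding m_def using assms by (intro power_mono) (auto simp: max_def)
  then have "m^3 \<le> 27/8" by (simp add: power3_eq_cube)
  moreover have "- ((x - lam) * (x - lam + \<epsilon>)) \<le> \<epsilon>^2/4"
    using zero_le_power2[of "x - lam + \<epsilon>/2"] by (simp add: power2_eq_square algebra_simps)
  ultimately have "m^3 * (- ((x - lam) * (x - lam + \<epsilon>))) \<le> 27/8 * (\<epsilon>^2/4)"
    using False by (intro mult_mono) (auto simp: m_def)
  moreover have "test_core lam \<epsilon> x = - (m^3 * (- ((x - lam) * (x - lam + \<epsilon>))))"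
    unfolding test_core_def m_def by simp
  ultimately show ?thesis using zero_le_power2[of \<epsilon>] by linarith
qed (auto simp: test_core_def intro: order_trans[of _ 0])

lemma test_fun_minus_core_bounds:
  assumes "x \<le> 1"
  shows "0 \<le> test_fun lam \<epsilon> x - test_core lam \<epsilon> x" "test_fun lam \<epsilon> x - test_core lam \<epsilon> x \<le> \<epsilon>^2"
  using test_core_ge[OF assms, of \<epsilon> lam] by (auto simp: test_fun_def max_def)

lemma abs_diff3_le_of_range:
  assumes "0 \<le> h" and "\<And>y. x \<le> y \<Longrightarrow> y \<le> x + 3*h \<Longrightarrow> a \<le> f y \<and> f y \<le> a + c"
  shows "\<bar>diff3 f h x\<bar> \<le> 4 * c"
proof -
  have "a \<le> f x \<and> f x \<le> a + c" "a \<le> f (x + h) \<and> f (x + h) \<le> a + c"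
    "a \<le> f (x + 2*h) \<and> f (x + 2*h) \<le> a + c" "a \<le> f (x + 3*h) \<and> f (x + 3*h) \<le> a + c"
    using assms by simp_all
  then show ?thesis unfolding diff3_def abs_le_iff by linarith
qed

lemma diff3_quintic_le:
  fixes u h c \<epsilon> :: real
  assumes u: "0 \<le> u" "u + 3*h \<le> 3/2" and h: "0 < h" and c: "1/2 \<le> c" "c \<le> 3/2"
    and e: "0 < \<epsilon>" "\<epsilon> \<le> 1/2"
  defines "p \<equiv> \<lambda>v. v^3 * ((v - c) * (v - c + \<epsilon>))"
  shows "\<bar>p (u + 3*h) - 3 * p (u + 2*h) + 3 * p (u + h) - p u\<bar> \<le> 1300 * h^3"
proof -
  define E where "E = 60*u^2 + 180*(u*h) + 150*h^2 - (2*c - \<epsilon>)*(24*u + 36*h) + 6*(c*(c - \<epsilon>))"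
  have "p (u + 3*h) - 3 * p (u + 2*h) + 3 * p (u + h) - p u = h^3 * E"
    unfolding p_def E_def by (simp add: power3_eq_cube power2_eq_square algebra_simps)
  moreover have "\<bar>E\<bar> \<le> 1300"
  proof -
    have u1: "u \<le> 3/2" and h1: "h \<le> 1/2" using u h by auto
    have "u^2 \<le> 9/4" using mult_mono[OF u1 u1] u by (simp add: power2_eq_square)
    moreover have "u*h \<le> 3/4" using mult_mono[OF u1 h1] u h by simp
    moreover have "h^2 \<le> 1/4" using mult_mono[OF h1 h1] h by (simp add: power2_eq_square)
    moreover have "\<bar>(2*c - \<epsilon>)*(24*u + 36*h)\<bar> \<le> 3 * 54"
      unfolding abs_mult by (rule mult_mono) (use u h1 h c e in auto)
    moreover have "\<bar>c*(c - \<epsilon>)\<bar> \<le> 3/2 * (3/2)"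
      unfolding abs_mult by (rule mult_mono) (use c e in auto)
    moreover have "0 \<le> u^2" "0 \<le> u*h" "0 \<le> h^2" using u h by auto
    ultimately show ?thesis unfolding E_def abs_le_iff by linarith
  qed
  ultimately show ?thesis using h by (simp add: abs_mult mult.commute mult_left_mono)
qed

lemma diff3_test_core_le:
  assumes lam: "0 \<le> lam" "lam \<le> 1" and e: "0 < \<epsilon>" "\<epsilon> \<le> 1/2"
    and h: "0 < h" and x: "-1 \<le> x" "x + 3*h \<le> 1"
  shows "\<bar>diff3 (test_core lam \<epsilon>) h x\<bar> \<le> 1300 * h^3"
proof (cases "-1/2 \<le> x")
  case True
  define u c where "u = x + 1/2" and "c = lam + 1/2"
  define p where "p v = v^3 * ((v - c) * (v - c + \<epsilon>))" for v
  have shift: "test_core lam \<epsilon> (x + t) = p (u + t)" if "0 \<le> t" for t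
    unfolding test_core_def p_def u_def c_def using that True by (simp add: algebra_simps)
  have "diff3 (test_core lam \<epsilon>) h x = p (u + 3*h) - 3 * p (u + 2*h) + 3 * p (u + h) - p u"
    unfolding diff3_def using shift[of "3*h"] shift[of "2*h"] shift[of h] shift[of 0] h by simp
  also have "\<bar>\<dots>\<bar> \<le> 1300 * h^3"
    unfolding p_def by (rule diff3_quintic_le) (use True x h lam e in \<open>auto simp: u_def c_def\<close>)
  finally show ?thesis .
next
  case False
  have bound: "\<bar>test_core lam \<epsilon> y\<bar> \<le> 135 * h^3" if "x \<le> y" "y \<le> x + 3*h" for y
  proof -
    define m where "m = max 0 (y + 1/2)"
    have "m \<le> 3*h" "0 \<le> m" unfolding m_def using that False h by auto
    then have "m^3 \<le> 27 * h^3" using power_mono[of m "3*h" 3] by (simp add: power_mult_distrib)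
    moreover have "\<bar>y - lam\<bar> \<le> 2" "\<bar>y - lam + \<epsilon>\<bar> \<le> 5/2"
      unfolding abs_le_iff using that x lam e by linarith+
    then have "\<bar>(y - lam) * (y - lam + \<epsilon>)\<bar> \<le> 2 * (5/2)"
      unfolding abs_mult by (rule mult_mono) auto
    ultimately have "m^3 * \<bar>(y - lam) * (y - lam + \<epsilon>)\<bar> \<le> 27 * h^3 * 5"
      using h by (intro mult_mono) (auto simp: m_def)
    then show ?thesis unfolding test_core_def m_def by (simp add: abs_mult)
  qed
  have "\<bar>diff3 (test_core lam \<epsilon>) h x\<bar> \<le> 4 * (270 * h^3)"
  proof (rule abs_diff3_le_of_range[where a = "-135 * h^3"])
    fix y assume "x \<le> y" "y \<le> x + 3*h"
    then show "-135 * h^3 \<le> test_core lam \<epsilon> y \<and> test_core lam \<epsilon> y \<le> -135 * h^3 + 270 * h^3"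
      using bound unfolding abs_le_iff by (intro conjI) fastforce+
  qed (use h in simp)
  then show ?thesis using h by simp
qed

lemma omega3_test_fun_le:
  assumes lam: "0 \<le> lam" "lam \<le> 1" and e: "0 < \<epsilon>" "\<epsilon> \<le> 1/2" and t: "0 < t"
  shows "omega3 (test_fun lam \<epsilon>) t \<le> 4 * \<epsilon>^2 + 1300 * t^3"
  unfolding omega3_def
proof (rule cSup_least)
  show "{\<bar>diff3 (test_fun lam \<epsilon>) h x\<bar> | h x. 0 < h \<and> h \<le> t \<and> -1 \<le> x \<and> x + 3*h \<le> 1} \<noteq> {}"
  proof -
    have "min t (2/3) > 0" "-1 + 3 * min t (2/3) \<le> 1" using t by auto
    then show ?thesis by fastforce
  qed
next
  fix y assume "y \<in> {\<bar>diff3 (test_fun lam \<epsilon>) h x\<bar> | h x. 0 < h \<and> h \<le> t \<and> -1 \<le> x \<and> x + 3*h \<le> 1}"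
  then obtain h x where y: "y = \<bar>diff3 (test_fun lam \<epsilon>) h x\<bar>"
    and h: "0 < h" "h \<le> t" and x: "-1 \<le> x" "x + 3*h \<le> 1"
    by blast
  define b where "b z = test_fun lam \<epsilon> z - test_core lam \<epsilon> z" for z
  have "diff3 (test_fun lam \<epsilon>) h x = diff3 (test_core lam \<epsilon>) h x + diff3 b h x"
    unfolding diff3_def b_def by simp
  moreover have "\<bar>diff3 b h x\<bar> \<le> 4 * \<epsilon>^2"
  proof (rule abs_diff3_le_of_range[where a = 0])
    fix z assume "x \<le> z" "z \<le> x + 3*h"
    then have "z \<le> 1" using x by simp
    then show "0 \<le> b z \<and> b z \<le> 0 + \<epsilon>^2" unfolding b_def using test_fun_minus_core_bounds by simp
  qed (use h in simp)
  moreover have "\<bar>diff3 (test_core lam \<epsilon>) h x\<bar> \<le> 1300 * h^3" by (rule diff3_test_core_le[OF lam e h(1) x])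
  moreover have "h^3 \<le> t^3" using h by (intro power_mono) auto
  ultimately show "y \<le> 4 * \<epsilon>^2 + 1300 * t^3" unfolding y by linarith
qed

section \<open>The weight \<open>rho\<close>\<close>

lemma rho_pos: "n \<ge> 1 \<Longrightarrow> x \<in> {-1..1} \<Longrightarrow> 0 < rho n x"
  unfolding rho_def using abs_square_le_1[of x] by (intro add_nonneg_pos) (auto simp: abs_le_iff)

lemma rho_le:
  assumes "n \<ge> 1"
  shows "rho n x \<le> 2 / real n"
proof -
  have n1: "real n \<ge> 1" using assms by simp
  have "sqrt (1 - x^2) / real n \<le> 1 / real n"
    using n1 by (intro divide_right_mono) (auto simp: real_sqrt_le_1_iff)
  moreover have "1 / (real n)^2 \<le> 1 / real n" using n1 by (simp add: field_simps power2_eq_square)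
  ultimately show ?thesis unfolding rho_def by simp
qed

lemma rho_sq_le:
  assumes "x \<in> {-1..1}"
  shows "(rho n x)^2 \<le> 2 * (1 - x^2) / (real n)^2 + 2 / (real n)^4"
proof -
  define a b where "a = sqrt (1 - x^2) / real n" and "b = 1 / (real n)^2"
  have "(a + b)^2 \<le> 2 * a^2 + 2 * b^2"
    using zero_le_power2[of "a - b"] by (simp add: power2_eq_square algebra_simps)
  moreover have "a^2 = (1 - x^2) / (real n)^2"
    unfolding a_def using assms abs_square_le_1[of x] by (simp add: power_divide abs_le_iff)
  moreover have "b^2 = 1 / (real n)^4" unfolding b_def by (simp add: power_divide flip: power_mult)
  ultimately show ?thesis unfolding rho_def a_def[symmetric] b_def[symmetric] by simp
qed

lemma cube_mult_sq_le_of_weight_bounds: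
  fixes \<rho> S w n :: real
  assumes \<rho>: "0 \<le> \<rho>" "\<rho>^2 \<le> 6 * w / n^2" and S: "0 \<le> S" "S \<le> n^2"
    and w: "0 \<le> w" "w * S \<le> 2" and n: "0 < n"
  shows "\<rho>^3 * S^2 \<le> 42 / n^2"
proof -
  have "(\<rho>^3 * S^2)^2 = (\<rho>^2)^3 * S^4" by (simp add: power_mult_distrib flip: power_mult)
  also have "\<dots> \<le> (6 * w / n^2)^3 * S^4" using \<rho> by (intro mult_right_mono power_mono) auto
  also have "\<dots> = 216 / (n^2)^3 * ((w * S)^3 * S)"
    by (simp add: power_divide power_mult_distrib eval_nat_numeral algebra_simps)
  also have "\<dots> \<le> 216 / (n^2)^3 * (2^3 * n^2)"
    using w S by (intro mult_left_mono mult_mono power_mono) auto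
  also have "\<dots> \<le> (42 / n^2)^2" using n by (simp add: field_simps eval_nat_numeral)
  finally show ?thesis by (rule power2_le_imp_le) simp
qed

lemma rho_cube_mult_chebS_sq_le:
  assumes n: "n \<ge> 1" and s: "s \<in> {-1..1}"
  shows "(rho n (1/4 + s * (3/4)))^3 * (poly (chebS n) s)^2 \<le> 42 / (real n)^2"
proof (rule cube_mult_sq_le_of_weight_bounds)
  define x where "x = 1/4 + s * (3/4)"
  define w where "w = max (1 - s) (1 / (real n)^2)"
  have x: "x \<in> {-1..1}" "-1/2 \<le> x" unfolding x_def using s by auto
  have n1: "real n \<ge> 1" using n by simp
  have "1 - x^2 \<le> 2 * (1 - s)"
  proof -
    have "1 - x^2 = (1 - x) * (1 + x)" by (simp add: power2_eq_square algebra_simps)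
    also have "\<dots> \<le> (1 - x) * 2" using x by (intro mult_left_mono) (auto simp: x_def)
    finally show ?thesis unfolding x_def using s by auto
  qed
  have "1 - s \<le> w" "1 / (real n)^2 \<le> w" unfolding w_def by auto
  then have "2 * (1 - x^2) / (real n)^2 \<le> 4 * w / (real n)^2"
    using \<open>1 - x^2 \<le> 2 * (1 - s)\<close> by (intro divide_right_mono) auto
  moreover have "2 / (real n)^4 \<le> 2 * w / (real n)^2"
  proof -
    have "2 / (real n)^4 = 2 * (1 / (real n)^2) / (real n)^2" by (simp add: power4_eq_xxxx power2_eq_square)
    also have "\<dots> \<le> 2 * w / (real n)^2" using \<open>1 / (real n)^2 \<le> w\<close> by (intro divide_right_mono) auto
    finally show ?thesis .
  qed
  ultimately show "(rho n x)^2 \<le> 6 * w / (real n)^2"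
    using rho_sq_le[OF x(1), of n] by (simp add: add_divide_distrib[symmetric])
  show "0 \<le> rho n x" using rho_pos[OF n x(1)] by simp
  show "0 \<le> poly (chebS n) s" "poly (chebS n) s \<le> (real n)^2" using chebS_bounds[OF s] by auto
  show "0 \<le> w" using \<open>1 - s \<le> w\<close> s by simp
  have "1 / (real n)^2 * poly (chebS n) s \<le> 1"
    using chebS_bounds(2)[OF s, of n] n1 by (simp add: divide_le_eq)
  then show "w * poly (chebS n) s \<le> 2"
    using chebS_bounds(3)[OF s, of n] unfolding w_def max_def by auto
  show "0 < real n" using n by simp
qed

section \<open>Approximants of the test function\<close>

definition nonneg_near :: "real poly \<Rightarrow> real \<Rightarrow> bool" where
  "nonneg_near P lam \<longleftrightarrow> (\<exists>e>0. \<forall>x\<in>{-1..1}. \<bar>x - lam\<bar> < e \<longrightarrow> 0 \<le> poly P x)"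

definition omega3_approximant :: "real \<Rightarrow> nat \<Rightarrow> (real \<Rightarrow> real) \<Rightarrow> real poly \<Rightarrow> bool" where
  "omega3_approximant K n f P \<longleftrightarrow> (\<forall>x\<in>{-1..1}. \<bar>f x - poly P x\<bar> \<le> K * omega3 f (rho n x))"

definition omega3_unapproximable :: "real \<Rightarrow> nat \<Rightarrow> real \<Rightarrow> (real \<Rightarrow> real) \<Rightarrow> bool" where
  "omega3_unapproximable K n lam f \<longleftrightarrow>
     (\<forall>P. degree P \<le> n \<longrightarrow> nonneg_near P lam \<longrightarrow> poly P lam = f lam \<longrightarrow> \<not> omega3_approximant K n f P)"

lemma poly_pderiv_pcompose_linear:
  "poly (pderiv (pcompose p [:a, b:])) s = poly (pderiv p) (a + s * b) * (b :: real)"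
  by (simp add: pderiv_pcompose poly_pcompose pderiv_pCons mult.commute)

lemma pderiv_eq_0_of_nonneg_near:
  fixes P :: "real poly"
  assumes lam: "-1 < lam" "lam < 1" and zero: "poly P lam = 0" and nonneg: "nonneg_near P lam"
  shows "poly (pderiv P) lam = 0"
proof -
  obtain e where e: "e > 0" "\<forall>x\<in>{-1..1}. \<bar>x - lam\<bar> < e \<longrightarrow> 0 \<le> poly P x"
    using nonneg unfolding nonneg_near_def by blast
  show ?thesis
  proof (rule DERIV_local_min[OF poly_DERIV])
    show "0 < min e (min (1 - lam) (1 + lam))" using e lam by simp
    show "\<forall>y. \<bar>lam - y\<bar> < min e (min (1 - lam) (1 + lam)) \<longrightarrow> poly P lam \<le> poly P y"
      using e zero by (auto simp: abs_less_iff)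
  qed
qed

lemma pderiv_le_0_at_one_of_nonneg_near:
  fixes P :: "real poly"
  assumes zero: "poly P 1 = 0" and nonneg: "nonneg_near P 1"
  shows "poly (pderiv P) 1 \<le> 0"
proof (rule ccontr)
  obtain e where e: "e > 0" "\<forall>x\<in>{-1..1}. \<bar>x - 1\<bar> < e \<longrightarrow> 0 \<le> poly P x"
    using nonneg unfolding nonneg_near_def by blast
  assume "\<not> poly (pderiv P) 1 \<le> 0"
  then obtain \<delta> where \<delta>: "\<delta> > 0" and dec: "\<forall>h>0. h < \<delta> \<longrightarrow> poly P (1 - h) < poly P 1"
    using DERIV_pos_inc_left[OF poly_DERIV] by (meson not_le)
  define h where "h = min (min \<delta> e) 1 / 2"
  have "0 < h" "h < \<delta>" "h < e" "h \<le> 1/2" unfolding h_def using \<delta> e by auto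
  then have "poly P (1 - h) < 0" "0 \<le> poly P (1 - h)" using dec zero e by auto
  then show False by simp
qed

text \<open>The affine map \<open>[:1/4, 3/4:]\<close> takes \<open>[-1, 1]\<close> onto \<open>[-1/2, 1]\<close>, where the test function
  differs from the polynomial \<open>test_poly\<close> by at most \<open>\<epsilon>\<^sup>2\<close>.\<close>

lemma rescaled_deviation_le:
  fixes P :: "real poly"
  assumes lam: "0 \<le> lam" "lam \<le> 1" and \<epsilon>: "0 < \<epsilon>" "\<epsilon> \<le> 1/2" and n: "n \<ge> 1" and K: "0 \<le> K"
    and approx: "omega3_approximant K n (test_fun lam \<epsilon>) P"
    and s: "s \<in> {-1..1}"
  shows "\<bar>poly (pcompose (P - test_poly lam \<epsilon>) [:1/4, 3/4:]) s\<bar>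
           \<le> K * (4 * \<epsilon>^2 + 1300 * (rho n (1/4 + s * (3/4)))^3) + \<epsilon>^2"
proof -
  define x where "x = 1/4 + s * (3/4)"
  have x: "x \<in> {-1..1}" "-1/2 \<le> x" unfolding x_def using s by auto
  have "K * omega3 (test_fun lam \<epsilon>) (rho n x) \<le> K * (4 * \<epsilon>^2 + 1300 * (rho n x)^3)"
    using omega3_test_fun_le[OF lam \<epsilon> rho_pos[OF n x(1)]] K by (rule mult_left_mono)
  moreover have "\<bar>test_fun lam \<epsilon> x - poly P x\<bar> \<le> K * omega3 (test_fun lam \<epsilon>) (rho n x)"
    using approx x unfolding omega3_approximant_def by blast
  moreover have "0 \<le> test_fun lam \<epsilon> x - poly (test_poly lam \<epsilon>) x"
    "test_fun lam \<epsilon> x - poly (test_poly lam \<epsilon>) x \<le> \<epsilon>^2"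
    using test_fun_minus_core_bounds[of x] test_core_eq_poly[OF x(2)] x by auto
  moreover have "poly (pcompose (P - test_poly lam \<epsilon>) [:1/4, 3/4:]) s = poly P x - poly (test_poly lam \<epsilon>) x"
    unfolding x_def by (simp add: poly_pcompose)
  ultimately show ?thesis unfolding x_def[symmetric] abs_le_iff by linarith
qed

lemma rescaled_deviation_uniform_le:
  fixes P :: "real poly"
  assumes lam: "0 \<le> lam" "lam \<le> 1" and \<epsilon>: "0 < \<epsilon>" "\<epsilon> \<le> 1/2" and n: "n \<ge> 1" and K: "0 \<le> K"
    and approx: "omega3_approximant K n (test_fun lam \<epsilon>) P"
    and s: "s \<in> {-1..1}"
  shows "\<bar>poly (pcompose (P - test_poly lam \<epsilon>) [:1/4, 3/4:]) s\<bar> \<le> (4*K + 1) * \<epsilon>^2 + 10400 * K / (real n)^3"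
proof -
  have "(rho n (1/4 + s * (3/4)))^3 \<le> (2 / real n)^3"
    using rho_le[OF n] rho_pos[OF n, of "1/4 + s * (3/4)"] s by (intro power_mono) auto
  then have "K * (1300 * (rho n (1/4 + s * (3/4)))^3) \<le> K * (10400 / (real n)^3)"
    using K by (intro mult_left_mono) (auto simp: power_divide)
  then show ?thesis using rescaled_deviation_le[OF assms] by (simp add: algebra_simps)
qed

lemma rescaled_deviation_weighted_le:
  fixes P :: "real poly"
  assumes lam: "0 \<le> lam" "lam \<le> 1" and \<epsilon>: "0 < \<epsilon>" "\<epsilon> \<le> 1/2" and n: "n \<ge> 1" and K: "0 \<le> K"
    and approx: "omega3_approximant K n (test_fun lam \<epsilon>) P"
    and s: "s \<in> {-1..1}"
  shows "\<bar>poly (pcompose (P - test_poly lam \<epsilon>) [:1/4, 3/4:] * chebS n ^ 2) s\<bar>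
           \<le> (4*K + 1) * \<epsilon>^2 * (real n)^4 + 54600 * K / (real n)^2"
proof -
  define \<rho> \<sigma> where "\<rho> = rho n (1/4 + s * (3/4))" and "\<sigma> = poly (chebS n) s"
  have \<sigma>: "0 \<le> \<sigma>" "\<sigma>^2 \<le> (real n)^4"
    using chebS_bounds[OF s, of n] power_mono[of \<sigma> "(real n)^2" 2] unfolding \<sigma>_def
    by (auto simp flip: power_mult)
  have "\<bar>poly (pcompose (P - test_poly lam \<epsilon>) [:1/4, 3/4:] * chebS n ^ 2) s\<bar>
      = \<bar>poly (pcompose (P - test_poly lam \<epsilon>) [:1/4, 3/4:]) s\<bar> * \<sigma>^2"
    unfolding \<sigma>_def by (simp add: abs_mult)
  also have "\<dots> \<le> (K * (4 * \<epsilon>^2 + 1300 * \<rho>^3) + \<epsilon>^2) * \<sigma>^2"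
    unfolding \<rho>_def by (intro mult_right_mono rescaled_deviation_le[OF assms]) simp
  also have "\<dots> = (4*K + 1) * \<epsilon>^2 * \<sigma>^2 + 1300 * K * (\<rho>^3 * \<sigma>^2)" by (simp add: algebra_simps)
  also have "\<dots> \<le> (4*K + 1) * \<epsilon>^2 * (real n)^4 + 1300 * K * (42 / (real n)^2)"
    using \<sigma> K rho_cube_mult_chebS_sq_le[OF n s] unfolding \<rho>_def \<sigma>_def
    by (intro add_mono mult_left_mono) auto
  finally show ?thesis by simp
qed

lemma degree_rescaled_deviation_le:
  assumes "degree P \<le> n" "n \<ge> 5"
  shows "degree (pcompose (P - test_poly lam \<epsilon>) [:1/4, 3/4:]) \<le> n"
  using assms degree_test_poly[of lam \<epsilon>] by (simp add: degree_pcompose degree_diff_le)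

lemma interior_budget_lt:
  fixes d n K \<epsilon> :: real
  assumes d: "0 < d" and n: "0 < n" and K: "0 \<le> K" and KK: "10^9 * (K * (K + 1)) \<le> d^2 * n"
    and \<epsilon>: "\<epsilon> = d / (768 * (K + 1) * n)"
  shows "6 * n * ((4*K + 1) * \<epsilon>^2 + 10400 * K / n^3) / d < 3 * \<epsilon> / 32"
proof -
  have K1: "0 < K + 1" using K by simp
  have \<epsilon>0: "0 < \<epsilon>" unfolding \<epsilon> using d n K1 by simp
  have \<epsilon>d: "\<epsilon> * (768 * (K + 1) * n) = d" unfolding \<epsilon> using n K1 by simp
  have "6 * n * ((4*K + 1) * \<epsilon>^2) \<le> 24 * n * (K + 1) * \<epsilon>^2"
    using n K by (simp add: algebra_simps)
  also have "\<dots> = \<epsilon> * (\<epsilon> * (768 * (K + 1) * n)) / 32" by (simp add: power2_eq_square algebra_simps)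
  also have "\<dots> = \<epsilon> * d / 32" using \<epsilon>d by simp
  finally have T1: "6 * n * ((4*K + 1) * \<epsilon>^2) / d \<le> \<epsilon> / 32" using d by (simp add: field_simps)
  have "62400 * K * (12288 * (K + 1)) = 766771200 * (K * (K + 1))" by simp
  also have "\<dots> < d^2 * n"
  proof -
    define X where "X = K * (K + 1)"
    have "0 \<le> X" "0 < d^2 * n" "10^9 * X \<le> d^2 * n" using K d n KK unfolding X_def by auto
    then show ?thesis unfolding X_def[symmetric] by simp
  qed
  finally have "62400 * K * (12288 * (K + 1)) < d^2 * n" .
  then have "62400 * K < d^2 * n / (12288 * (K + 1))" using K1 by (simp add: field_simps)
  also have "d^2 * n / (12288 * (K + 1)) = \<epsilon> * n^2 * d / 16"
    unfolding \<epsilon> using n K1 by (simp add: power2_eq_square)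
  finally have T2: "6 * n * (10400 * K / n^3) / d < \<epsilon> / 16"
    using n d by (simp add: field_simps power2_eq_square power3_eq_cube)
  have "6 * n * ((4*K + 1) * \<epsilon>^2 + 10400 * K / n^3) / d
      = 6 * n * ((4*K + 1) * \<epsilon>^2) / d + 6 * n * (10400 * K / n^3) / d"
    by (simp add: algebra_simps add_divide_distrib)
  then show ?thesis using T1 T2 by linarith
qed

lemma endpoint_budget_lt:
  fixes n K \<epsilon> :: real
  assumes n: "10^10 \<le> n" and K: "0 \<le> K" and KK: "K * (K + 1) \<le> 2 * n"
    and \<epsilon>: "\<epsilon> = 1 / (1620 * (K + 1) * n^2)"
  shows "81 * n^2 * ((4*K + 1) * \<epsilon>^2 * n^4 + 54600 * K / n^2) < 2 * \<epsilon> * n^4"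
proof -
  have n0: "0 < n" using n by simp
  have K1: "0 < K + 1" using K by simp
  have \<epsilon>0: "0 < \<epsilon>" unfolding \<epsilon> using n0 K1 by simp
  have \<epsilon>n: "\<epsilon> * (1620 * (K + 1) * n^2) = 1" unfolding \<epsilon> using n0 K1 by simp
  have "81 * n^2 * ((4*K + 1) * \<epsilon>^2 * n^4) \<le> 324 * (K + 1) * n^2 * \<epsilon>^2 * n^4"
    using n0 K by (simp add: algebra_simps)
  also have "\<dots> = (\<epsilon> * (1620 * (K + 1) * n^2)) * \<epsilon> * n^4 / 5"
    by (simp add: power2_eq_square algebra_simps)
  finally have T1: "81 * n^2 * ((4*K + 1) * \<epsilon>^2 * n^4) \<le> \<epsilon> * n^4 / 5" using \<epsilon>n by simp
  have \<epsilon>n4: "\<epsilon> * n^4 = n^2 / (1620 * (K + 1))"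
  proof -
    have "\<epsilon> * n^4 = (n^2 * n^2) / (n^2 * (1620 * (K + 1)))"
      unfolding \<epsilon> by (simp add: mult_ac power4_eq_xxxx power2_eq_square)
    also have "\<dots> = n^2 / (1620 * (K + 1))" using n0 by (subst mult_divide_mult_cancel_left) auto
    finally show ?thesis .
  qed
  have "4422600 * K * (1620 * (K + 1)) * 5 = 35823060000 * (K * (K + 1))" by simp
  also have "\<dots> \<le> 35823060000 * (2 * n)" using KK by simp
  also have "\<dots> < 9 * n^2" using n by (simp add: power2_eq_square)
  finally have "4422600 * K < 9 * (n^2 / (1620 * (K + 1))) / 5" using K1 by (simp add: field_simps)
  then have T2: "81 * n^2 * (54600 * K / n^2) < 9 * \<epsilon> * n^4 / 5"
    unfolding \<epsilon>n4[symmetric] using n0 by simp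
  show ?thesis using T1 T2 by (simp add: algebra_simps)
qed

lemma interior_no_approximant:
  fixes P :: "real poly" and lam :: real
  defines "s0 \<equiv> (4*lam - 1) / 3"
  defines "d \<equiv> min (1 - s0) (1 + s0)"
  assumes lam: "0 \<le> lam" "lam < 1" and n: "n \<ge> 5" and K: "0 \<le> K"
    and KK: "10^9 * (K * (K + 1)) \<le> d^2 * real n"
    and \<epsilon>: "\<epsilon> = d / (768 * (K + 1) * real n)"
    and deg: "degree P \<le> n" and zero: "poly P lam = 0"
    and nonneg: "nonneg_near P lam"
    and approx: "omega3_approximant K n (test_fun lam \<epsilon>) P"
  shows False
proof -
  have s0: "-1 < s0" "s0 < 1" "1/4 + s0 * (3/4) = lam" unfolding s0_def using lam by (auto simp: field_simps)
  have d: "0 < d" "d \<le> 1" unfolding d_def using s0 by auto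
  have n1: "1 \<le> real n" using n by simp
  have "1 \<le> (K + 1) * real n" using K n1 mult_mono[of 1 "K + 1" 1 "real n"] by simp
  then have "768 \<le> 768 * (K + 1) * real n" by linarith
  then have "\<epsilon> \<le> d / 768" unfolding \<epsilon> using d by (intro divide_left_mono) linarith+
  moreover have "0 < \<epsilon>" unfolding \<epsilon> using d K n1 by simp
  ultimately have \<epsilon>_bounds: "0 < \<epsilon>" "\<epsilon> \<le> 1/2" using d by auto
  define Q where "Q = pcompose (P - test_poly lam \<epsilon>) [:1/4, 3/4:]"
  define B where "B = (4*K + 1) * \<epsilon>^2 + 10400 * K / (real n)^3"
  have "\<forall>s\<in>{-1..1}. \<bar>poly Q s\<bar> \<le> B"
    unfolding Q_def B_def using rescaled_deviation_uniform_le[OF lam(1) _ \<epsilon>_bounds _ K approx] lam n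
    by simp
  then have "\<bar>poly (pderiv Q) s0\<bar> \<le> 6 * real n * B / d"
    unfolding d_def using bernstein_inequality[OF _ _ _ s0(1,2)] degree_rescaled_deviation_le[OF deg n] n
    unfolding Q_def by simp
  also have "\<dots> < 3 * \<epsilon> / 32"
    unfolding B_def using interior_budget_lt[OF d(1) _ K KK \<epsilon>] n1 by simp
  also have "3 * \<epsilon> / 32 \<le> (lam + 1/2)^3 * \<epsilon> * (3/4)"
    using power_mono[of "1/2" "lam + 1/2" 3] lam \<epsilon>_bounds by (simp add: power3_eq_cube)
  also have "\<dots> = \<bar>poly (pderiv Q) s0\<bar>"
    unfolding Q_def poly_pderiv_pcompose_linear s0(3)
    using pderiv_eq_0_of_nonneg_near[OF _ lam(2) zero nonneg] lam \<epsilon>_bounds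
    by (simp add: pderiv_diff pderiv_test_poly_at_lam abs_mult)
  finally show False by simp
qed

lemma pderiv_weighted_deviation_at_one_ge:
  fixes P :: "real poly"
  assumes zero: "poly P 1 = 0" and P': "poly (pderiv P) 1 \<le> 0" and \<epsilon>: "0 < \<epsilon>"
  shows "2 * \<epsilon> * (real n)^4
           \<le> \<bar>poly (pderiv (pcompose (P - test_poly 1 \<epsilon>) [:1/4, 3/4:] * chebS n ^ 2)) 1\<bar>"
proof -
  define Q where "Q = pcompose (P - test_poly 1 \<epsilon>) [:1/4, 3/4:]"
  define c where "c = (27/8 * \<epsilon> - poly (pderiv P) 1) * (3/4)"
  have "poly Q 1 = 0" unfolding Q_def using zero by (simp add: poly_pcompose poly_test_poly)
  moreover have "poly (pderiv Q) 1 = - c"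
    unfolding Q_def c_def poly_pderiv_pcompose_linear using pderiv_test_poly_at_lam[of 1 \<epsilon>]
    by (simp add: pderiv_diff power3_eq_cube algebra_simps)
  ultimately have "poly (pderiv (Q * chebS n ^ 2)) 1 = - ((real n)^4 * c)"
    unfolding pderiv_mult using chebS_one[of n] by (simp flip: power_mult)
  then have "\<bar>poly (pderiv (Q * chebS n ^ 2)) 1\<bar> = \<bar>c\<bar> * (real n)^4" by (simp add: abs_mult)
  moreover have "2 * \<epsilon> \<le> \<bar>c\<bar>" unfolding c_def using P' \<epsilon> by (simp add: left_diff_distrib)
  ultimately show ?thesis unfolding Q_def by (simp add: mult_right_mono)
qed

lemma endpoint_no_approximant:
  fixes P :: "real poly"
  assumes n: "10^10 \<le> n" and K: "0 \<le> K" and KK: "K * (K + 1) \<le> 2 * real n"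
    and \<epsilon>: "\<epsilon> = 1 / (1620 * (K + 1) * (real n)^2)"
    and deg: "degree P \<le> n" and zero: "poly P 1 = 0" and nonneg: "nonneg_near P 1"
    and approx: "omega3_approximant K n (test_fun 1 \<epsilon>) P"
  shows False
proof -
  have n1: "1 \<le> real n" "5 \<le> n" using n by auto
  have "1 \<le> (K + 1) * (real n)^2" using K n1 mult_mono[of 1 "K + 1" 1 "(real n)^2"] by simp
  then have "1620 \<le> 1620 * (K + 1) * (real n)^2" by linarith
  then have "\<epsilon> \<le> 1/1620" unfolding \<epsilon> by (intro divide_left_mono) linarith+
  moreover have "0 < \<epsilon>" unfolding \<epsilon> using K n1 by simp
  ultimately have \<epsilon>_bounds: "0 < \<epsilon>" "\<epsilon> \<le> 1/2" by auto
  define Q where "Q = pcompose (P - test_poly 1 \<epsilon>) [:1/4, 3/4:]"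
  define B where "B = (4*K + 1) * \<epsilon>^2 * (real n)^4 + 54600 * K / (real n)^2"
  have "degree (Q * chebS n ^ 2) \<le> degree Q + degree (chebS n) * 2"
    using degree_mult_le[of Q "chebS n ^ 2"] degree_power_le[of "chebS n" 2] by linarith
  then have deg_G: "degree (Q * chebS n ^ 2) \<le> 3 * n"
    using degree_rescaled_deviation_le[OF deg n1(2), of 1 \<epsilon>] degree_chebS[of n] unfolding Q_def by linarith
  have "\<forall>s\<in>{-1..1}. \<bar>poly (Q * chebS n ^ 2) s\<bar> \<le> B"
    unfolding Q_def B_def using rescaled_deviation_weighted_le[OF _ _ \<epsilon>_bounds _ K approx] n1 by simp
  then have "\<bar>poly (pderiv (Q * chebS n ^ 2)) 1\<bar> \<le> 9 * (real (3 * n))^2 * B"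
    using markov_inequality_at_one[OF deg_G] n1 by simp
  also have "\<dots> = 81 * (real n)^2 * B" by (simp add: power2_eq_square)
  also have "\<dots> < 2 * \<epsilon> * (real n)^4" unfolding B_def by (rule endpoint_budget_lt[OF _ K KK \<epsilon>]) (use n in simp)
  also have "\<dots> \<le> \<bar>poly (pderiv (Q * chebS n ^ 2)) 1\<bar>"
    unfolding Q_def using pderiv_weighted_deviation_at_one_ge[OF zero _ \<epsilon>_bounds(1)]
      pderiv_le_0_at_one_of_nonneg_near[OF zero nonneg] by blast
  finally show False by simp
qed

lemma test_fun_not_approximable:
  fixes lam :: real
  assumes lam: "0 \<le> lam" "lam \<le> 1"
  obtains c N where "0 < c"
    and "\<And>n K. N \<le> n \<Longrightarrow> 0 \<le> K \<Longrightarrow> K * (K + 1) \<le> c * real n \<Longrightarrow>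
      \<exists>\<epsilon>. omega3_unapproximable K n lam (test_fun lam \<epsilon>)"
proof (cases "lam < 1")
  case True
  define d where "d = min (1 - (4*lam - 1) / 3) (1 + (4*lam - 1) / 3)"
  have "0 < d" unfolding d_def using lam True by (auto simp: field_simps)
  show ?thesis
  proof (rule that[of "d^2 / 10^9" 5])
    fix n K assume n: "5 \<le> n" and K: "0 \<le> K" and KK: "K * (K + 1) \<le> d^2 / 10^9 * real n"
    then have "10^9 * (K * (K + 1)) \<le> d^2 * real n" by (simp add: field_simps)
    then show "\<exists>\<epsilon>. omega3_unapproximable K n lam (test_fun lam \<epsilon>)"
      using interior_no_approximant[OF lam(1) True n K, of "d / (768 * (K + 1) * real n)"]
      unfolding d_def omega3_unapproximable_def test_fun_at_lam by blast
  qed (use \<open>0 < d\<close> in simp)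
next
  case False
  then have "lam = 1" using lam by simp
  show ?thesis
  proof (rule that[of 2 "10^10"])
    fix n K assume n: "10^10 \<le> n" and K: "0 \<le> K" and KK: "K * (K + 1) \<le> 2 * real n"
    show "\<exists>\<epsilon>. omega3_unapproximable K n lam (test_fun lam \<epsilon>)"
      using endpoint_no_approximant[OF n K KK, of "1 / (1620 * (K + 1) * (real n)^2)"]
      unfolding \<open>lam = 1\<close> omega3_unapproximable_def test_fun_at_lam by blast
  qed simp
qed

lemma sqrt_scaled_times_succ_le:
  fixes \<eta> :: real
  assumes "0 \<le> \<eta>" "\<eta> \<le> 1" "n \<ge> 1"
  shows "(\<eta> * sqrt (real n)) * (\<eta> * sqrt (real n) + 1) \<le> 2 * \<eta> * real n"
proof -
  have "1 \<le> sqrt (real n)" using assms(3) by simp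
  then have "sqrt (real n) \<le> real n" using mult_left_mono[of 1 "sqrt (real n)" "sqrt (real n)"] by simp
  moreover have "\<eta> * \<eta> \<le> \<eta>" using assms by (simp add: mult_left_le)
  moreover have "(\<eta> * sqrt (real n)) * (\<eta> * sqrt (real n) + 1) = (\<eta> * \<eta>) * real n + \<eta> * sqrt (real n)"
    by (simp add: algebra_simps)
  ultimately show ?thesis
    using add_mono[OF mult_right_mono[of "\<eta> * \<eta>" \<eta> "real n"] mult_left_mono[of "sqrt (real n)" "real n" \<eta>]]
      assms by simp
qed

lemma exists_test_fun_not_approximable:
  fixes lam :: real and \<eta> :: "nat \<Rightarrow> real"
  assumes lam: "0 \<le> lam" "lam \<le> 1" and \<eta>: "\<And>n. 0 \<le> \<eta> n" "\<eta> \<longlonglongrightarrow> 0"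
  obtains n \<epsilon> where "n0 \<le> n" "1 \<le> n"
    "omega3_unapproximable (\<eta> n * sqrt (real n)) n lam (test_fun lam \<epsilon>)"
proof -
  obtain c N where c: "0 < c" and not_approx: "\<And>n K. N \<le> n \<Longrightarrow> 0 \<le> K \<Longrightarrow>
      K * (K + 1) \<le> c * real n \<Longrightarrow> \<exists>\<epsilon>. omega3_unapproximable K n lam (test_fun lam \<epsilon>)"
    using test_fun_not_approximable[OF lam] by blast
  obtain M where M: "\<And>n. M \<le> n \<Longrightarrow> \<eta> n < min 1 (c/2)"
    using order_tendstoD(2)[OF \<eta>(2), of "min 1 (c/2)"] c by (auto simp: eventually_sequentially)
  define n where "n = max (max n0 N) (max M 1)"
  have n: "n0 \<le> n" "N \<le> n" "1 \<le> n" "M \<le> n" unfolding n_def by auto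
  have "(\<eta> n * sqrt (real n)) * (\<eta> n * sqrt (real n) + 1) \<le> 2 * \<eta> n * real n"
    using sqrt_scaled_times_succ_le[OF \<eta>(1)] M[OF n(4)] n(3) by simp
  also have "\<dots> \<le> c * real n" using M[OF n(4)] by (intro mult_right_mono) auto
  finally have "(\<eta> n * sqrt (real n)) * (\<eta> n * sqrt (real n) + 1) \<le> c * real n" .
  moreover have "0 \<le> \<eta> n * sqrt (real n)" using \<eta>(1) by simp
  ultimately show ?thesis using that[OF n(1,3)] not_approx[OF n(2)] by blast
qed

theorem lemma3p4:
  fixes A lam :: real and n0 :: nat and \<alpha> :: "nat \<Rightarrow> real"
  assumes "A > 1" and "0 \<le> lam" and "lam \<le> 1"
    and "\<And>n. \<alpha> n > 0" and "\<alpha> \<longlonglongrightarrow> 0"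
  shows "\<exists>n f. n \<ge> n0 \<and> n \<ge> 1 \<and>
           continuous_on {-1..1} f \<and>
           (\<forall>x\<in>{-1..1}. f x \<ge> 0) \<and>
           (\<forall>x\<in>{-1..-1/2}. f x = 0) \<and>
           (\<forall>P :: real poly. degree P \<le> n \<longrightarrow>
              (\<exists>e>0. \<forall>x\<in>{-1..1}. \<bar>x - lam\<bar> < e \<longrightarrow> poly P x \<ge> 0) \<longrightarrow>
              poly P lam = f lam \<longrightarrow>
              (\<exists>x\<in>{-1..1}. \<bar>f x - poly P x\<bar> > A * \<alpha> n * sqrt (real n) * omega3 f (rho n x)))"
proof -
  have "0 \<le> A * \<alpha> n" for n using assms(1) assms(4)[of n] by simp
  then obtain n \<epsilon> where n: "n0 \<le> n" "1 \<le> n"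
    and no_P: "omega3_unapproximable (A * \<alpha> n * sqrt (real n)) n lam (test_fun lam \<epsilon>)"
    using exists_test_fun_not_approximable[OF assms(2,3), of "\<lambda>n. A * \<alpha> n"]
      tendsto_mult_right_zero[OF assms(5)] by blast
  then show ?thesis
    using continuous_on_test_fun test_fun_nonneg test_fun_eq_0_left
    unfolding omega3_unapproximable_def nonneg_near_def omega3_approximant_def
    by (intro exI[of _ n] exI[of _ "test_fun lam \<epsilon>"]) (auto simp: not_le)
qed

end
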